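(* For $0\le i\le n$ and integers $d,p$: if $(d+1,p)\in DP_i$ and $(d,p)\ge(0,\pi_0)$, then $(d,p)\in DP_i$.
   Context: Let $x_0\le x_1\le\cdots\le x_{n+1}$ be real numbers, $\{x\}=x-\lfloor x\rfloor$, and let $\pi=(\pi_0,\dots,\pi_{n+1})$ be the permutation of $\{0,\dots,n+1\}$ such that for $0\le i<j\le n+1$, $\pi_i>\pi_j$ iff $(\{x_i\},-x_i,i)<(\{x_j\},-x_j,j)$ lexicographically. For a sequence of indices $s_0<\cdots<s_k$, a drop is a consecutive pair $(s_{h-1},s_h)$ with $\pi_{s_{h-1}}>\pi_{s_h}$. For $0\le h\le i\le n$, $dp(h,i)$ is the pair $(d(h,i),p(h,i))$, where $d(h,i)$ is the minimum number of drops over all sequences of $h+1$ indices $0=s_0<s_1<\cdots<s_h\le i$, and $p(h,i)$ is the minimum of $\pi_{s_h}$ over all such sequences having exactly $d(h,i)$ drops. Let $DP_i=\{dp(h,i)\mid 0\le h\le i\}$. Pairs are compared lexicographically. *)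

theory Defs
  imports Complex_Main "HOL-Library.Product_Lexorder"
begin

text \<open>Index sequences 0 = s_0 < s_1 < ... < s_h <= i (only values s 0 .. s h matter).\<close>
definition idx_seqs :: "nat \<Rightarrow> nat \<Rightarrow> (nat \<Rightarrow> nat) set" where
  "idx_seqs h i = {s. s 0 = 0 \<and> (\<forall>l<h. s l < s (Suc l)) \<and> s h \<le> i}"

definition drops :: "(nat \<Rightarrow> nat) \<Rightarrow> nat \<Rightarrow> (nat \<Rightarrow> nat) \<Rightarrow> nat" where
  "drops \<sigma> h s = card {l \<in> {1..h}. \<sigma> (s (l - 1)) > \<sigma> (s l)}"

definition d_val :: "(nat \<Rightarrow> nat) \<Rightarrow> nat \<Rightarrow> nat \<Rightarrow> nat" where
  "d_val \<sigma> h i = Min (drops \<sigma> h ` idx_seqs h i)"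

definition p_val :: "(nat \<Rightarrow> nat) \<Rightarrow> nat \<Rightarrow> nat \<Rightarrow> nat" where
  "p_val \<sigma> h i = Min ((\<lambda>s. \<sigma> (s h)) ` {s \<in> idx_seqs h i. drops \<sigma> h s = d_val \<sigma> h i})"

definition dp :: "(nat \<Rightarrow> nat) \<Rightarrow> nat \<Rightarrow> nat \<Rightarrow> int \<times> int" where
  "dp \<sigma> h i = (int (d_val \<sigma> h i), int (p_val \<sigma> h i))"

definition DP :: "(nat \<Rightarrow> nat) \<Rightarrow> nat \<Rightarrow> (int \<times> int) set" where
  "DP \<sigma> i = {dp \<sigma> h i | h. h \<le> i}"

end

theory Submission
  imports Defs
begin

text \<open>
  \<open>dp \<sigma> h i\<close> is the lexicographic minimum of the pair (drops, last value) over all index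
  sequences of length \<open>h + 1\<close> ending at most at \<open>i\<close>. Splitting the sequences ending at most at
  \<open>i + 1\<close> according to whether they use the index \<open>i + 1\<close> gives the row recurrence
  \<open>dp (h + 1) (i + 1) = min (dp (h + 1) i) (extend (dp h i))\<close>, where appending an index of value
  \<open>v = \<sigma> (i + 1)\<close> adds a drop iff the last value exceeds \<open>v\<close>. For injective \<open>\<sigma>\<close> every row
  is strictly increasing in \<open>h\<close> and avoids the value \<open>v\<close> in its second components.
  The theorem follows from an invariant of the rows: each row is closed under lowering the first
  component by one, as long as the result stays above the first entry \<open>(0, \<sigma> 0)\<close>. The invariant
  survives the recurrence,
  because a lowered pair that is missing in the new row would have to fall strictly between two
  consecutive entries of the old row, which closure of the old row rules out.
\<close>

definition extend_dp :: "int \<Rightarrow> int \<times> int \<Rightarrow> int \<times> int" where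
  "extend_dp v c = (fst c + (if snd c > v then 1 else 0), v)"

lemma mono_extend_dp: "mono (extend_dp v)"
  by (rule monoI) (auto simp: extend_dp_def less_eq_prod_def)

lemma less_extend_dp: "snd c \<noteq> v \<Longrightarrow> c < extend_dp v c"
  by (cases c) (auto simp: extend_dp_def)

definition seq_dp :: "(nat \<Rightarrow> nat) \<Rightarrow> nat \<Rightarrow> (nat \<Rightarrow> nat) \<Rightarrow> int \<times> int" where
  "seq_dp \<sigma> h s = (int (drops \<sigma> h s), int (\<sigma> (s h)))"

lemma idx_seqs_index_le: "s \<in> idx_seqs h i \<Longrightarrow> l \<le> h \<Longrightarrow> l \<le> s l"
proof (induction l)
  case (Suc l)
  then have "s l < s (Suc l)" by (simp add: idx_seqs_def)
  with Suc show ?case by simp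
qed simp

lemma idx_seqs_eq_empty_iff: "idx_seqs h i = {} \<longleftrightarrow> i < h"
proof
  assume "idx_seqs h i = {}"
  then have "(\<lambda>l. l) \<notin> idx_seqs h i" by blast
  then show "i < h" by (simp add: idx_seqs_def)
next
  assume "i < h"
  then show "idx_seqs h i = {}"
    using idx_seqs_index_le[of _ h i h] by (force simp: idx_seqs_def)
qed

lemma drops_le: "drops \<sigma> h s \<le> h"
proof -
  have "drops \<sigma> h s \<le> card {1..h}" unfolding drops_def by (rule card_mono) auto
  then show ?thesis by simp
qed

lemma drops_cong: "(\<And>l. l \<le> h \<Longrightarrow> s l = t l) \<Longrightarrow> drops \<sigma> h s = drops \<sigma> h t"
  unfolding drops_def by (rule arg_cong[where f = card]) auto

lemma drops_Suc:
  "drops \<sigma> (Suc h) s = drops \<sigma> h s + (if \<sigma> (s h) > \<sigma> (s (Suc h)) then 1 else 0)"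
proof -
  let ?D = "\<lambda>l. \<sigma> (s (l - 1)) > \<sigma> (s l)"
  have "{l \<in> {1..Suc h}. ?D l} = {l \<in> {1..h}. ?D l} \<union> (if ?D (Suc h) then {Suc h} else {})"
    by (auto simp: le_Suc_eq)
  then show ?thesis unfolding drops_def by (simp add: card_insert_if)
qed

lemma seq_dp_Suc: "seq_dp \<sigma> (Suc h) s = extend_dp (int (\<sigma> (s (Suc h)))) (seq_dp \<sigma> h s)"
  by (simp add: seq_dp_def extend_dp_def drops_Suc)

lemma finite_seq_dp_image: "finite (seq_dp \<sigma> h ` idx_seqs h i)"
proof (rule finite_subset)
  show "seq_dp \<sigma> h ` idx_seqs h i \<subseteq> int ` {..h} \<times> int ` \<sigma> ` {..i}"
    by (auto simp: seq_dp_def idx_seqs_def drops_le)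
qed auto

lemma dp_eq_Min:
  assumes "h \<le> i"
  shows "dp \<sigma> h i = Min (seq_dp \<sigma> h ` idx_seqs h i)"
proof -
  let ?I = "idx_seqs h i"
  let ?L = "{s \<in> ?I. drops \<sigma> h s = d_val \<sigma> h i}"
  have ne: "?I \<noteq> {}" using assms by (simp add: idx_seqs_eq_empty_iff)
  have fin_drops: "finite (drops \<sigma> h ` ?I)"
    by (rule finite_subset[of _ "{..h}"]) (auto simp: drops_le)
  have fin_last: "finite ((\<lambda>s. \<sigma> (s h)) ` ?L)"
    by (rule finite_subset[of _ "\<sigma> ` {..i}"]) (auto simp: idx_seqs_def)
  have "d_val \<sigma> h i \<in> drops \<sigma> h ` ?I"
    unfolding d_val_def using fin_drops ne by simp
  then have "?L \<noteq> {}" by force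
  then have "p_val \<sigma> h i \<in> (\<lambda>s. \<sigma> (s h)) ` ?L"
    unfolding p_val_def using fin_last by simp
  then have "dp \<sigma> h i \<in> seq_dp \<sigma> h ` ?I"
    by (force simp: dp_def seq_dp_def)
  moreover have "dp \<sigma> h i \<le> seq_dp \<sigma> h s" if "s \<in> ?I" for s
  proof -
    have "d_val \<sigma> h i \<le> drops \<sigma> h s" unfolding d_val_def using fin_drops that by simp
    moreover have "p_val \<sigma> h i \<le> \<sigma> (s h)" if "drops \<sigma> h s = d_val \<sigma> h i"
      unfolding p_val_def using fin_last \<open>s \<in> ?I\<close> that by simp
    ultimately show ?thesis
      by (cases "drops \<sigma> h s = d_val \<sigma> h i") (auto simp: dp_def seq_dp_def)
  qed
  ultimately show ?thesis
    by (intro Min_eqI[symmetric] finite_seq_dp_image) auto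
qed

lemma dp_0: "dp \<sigma> 0 i = (0, int (\<sigma> 0))"
proof -
  have "seq_dp \<sigma> 0 ` idx_seqs 0 i = {(0, int (\<sigma> 0))}"
    by (auto simp: seq_dp_def drops_def idx_seqs_def image_iff intro: exI[of _ "\<lambda>l. l"])
  then show ?thesis by (simp add: dp_eq_Min)
qed

text \<open>A row \<open>a\<close> has length \<open>m\<close>; the next row has length \<open>m + 1\<close>, and \<open>v\<close> is the value of the new index.\<close>
definition next_row :: "(nat \<Rightarrow> int \<times> int) \<Rightarrow> nat \<Rightarrow> int \<Rightarrow> nat \<Rightarrow> int \<times> int" where
  "next_row a m v h = (case h of 0 \<Rightarrow> a 0
     | Suc g \<Rightarrow> if h < m then min (a h) (extend_dp v (a g)) else extend_dp v (a g))"

lemma seq_dp_image_Suc: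
  "seq_dp \<sigma> (Suc g) ` idx_seqs (Suc g) (Suc j) =
     seq_dp \<sigma> (Suc g) ` idx_seqs (Suc g) j \<union>
     extend_dp (int (\<sigma> (Suc j))) ` seq_dp \<sigma> g ` idx_seqs g j"
    (is "?lhs = ?stay \<union> ?ext")
proof
  show "?lhs \<subseteq> ?stay \<union> ?ext"
  proof
    fix z assume "z \<in> ?lhs"
    then obtain t where t: "t \<in> idx_seqs (Suc g) (Suc j)" and z: "z = seq_dp \<sigma> (Suc g) t" by blast
    show "z \<in> ?stay \<union> ?ext"
    proof (cases "t (Suc g) \<le> j")
      case True
      with t z show ?thesis by (auto simp: idx_seqs_def)
    next
      case False
      with t have "t (Suc g) = Suc j" "t \<in> idx_seqs g j" by (auto simp: idx_seqs_def)
      with z show ?thesis by (simp add: seq_dp_Suc)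
    qed
  qed
next
  have "idx_seqs (Suc g) j \<subseteq> idx_seqs (Suc g) (Suc j)" by (auto simp: idx_seqs_def)
  moreover have "?ext \<subseteq> ?lhs"
  proof
    fix z assume "z \<in> ?ext"
    then obtain s where s: "s \<in> idx_seqs g j"
      and z: "z = extend_dp (int (\<sigma> (Suc j))) (seq_dp \<sigma> g s)"
      by blast
    define t where "t = s(Suc g := Suc j)"
    have "t \<in> idx_seqs (Suc g) (Suc j)"
      using s by (auto simp: idx_seqs_def t_def less_Suc_eq)
    moreover have "seq_dp \<sigma> g t = seq_dp \<sigma> g s"
      using drops_cong[of g t s \<sigma>] by (simp add: seq_dp_def t_def)
    ultimately show "z \<in> ?lhs" using z by (force simp: seq_dp_Suc t_def)
  qed
  ultimately show "?stay \<union> ?ext \<subseteq> ?lhs" by blast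
qed

lemma dp_next_row:
  assumes "h \<le> Suc j"
  shows "dp \<sigma> h (Suc j) = next_row (\<lambda>h. dp \<sigma> h j) (Suc j) (int (\<sigma> (Suc j))) h"
proof (cases h)
  case 0
  then show ?thesis by (simp add: next_row_def dp_0)
next
  case (Suc g)
  let ?v = "int (\<sigma> (Suc j))"
  have "g \<le> j" using assms Suc by simp
  then have ext: "Min (extend_dp ?v ` seq_dp \<sigma> g ` idx_seqs g j) = extend_dp ?v (dp \<sigma> g j)"
    by (simp add: dp_eq_Min mono_Min_commute[OF mono_extend_dp] finite_seq_dp_image
        idx_seqs_eq_empty_iff)
  show ?thesis
  proof (cases "Suc g \<le> j")
    case True
    then show ?thesis
      using Suc \<open>g \<le> j\<close> ext
      by (simp add: next_row_def dp_eq_Min seq_dp_image_Suc Min.union finite_seq_dp_image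
          idx_seqs_eq_empty_iff)
  next
    case False
    then have "idx_seqs (Suc g) j = {}" by (simp add: idx_seqs_eq_empty_iff)
    then show ?thesis
      using False Suc \<open>g \<le> j\<close> ext by (simp add: next_row_def dp_eq_Min seq_dp_image_Suc)
  qed
qed

lemma dp_less_dp_Suc:
  assumes "Suc h \<le> i" and inj: "inj_on \<sigma> {0..i}"
  shows "dp \<sigma> h i < dp \<sigma> (Suc h) i"
proof -
  have "dp \<sigma> (Suc h) i \<in> seq_dp \<sigma> (Suc h) ` idx_seqs (Suc h) i"
    using assms(1) by (simp add: dp_eq_Min finite_seq_dp_image idx_seqs_eq_empty_iff)
  then obtain s where s: "s \<in> idx_seqs (Suc h) i"
    and opt: "dp \<sigma> (Suc h) i = seq_dp \<sigma> (Suc h) s"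
    by blast
  then have "s \<in> idx_seqs h i" "s h < s (Suc h)" "s (Suc h) \<le> i" by (auto simp: idx_seqs_def)
  then have "dp \<sigma> h i \<le> seq_dp \<sigma> h s"
    using assms(1) by (simp add: dp_eq_Min finite_seq_dp_image)
  also have "\<dots> < extend_dp (int (\<sigma> (s (Suc h)))) (seq_dp \<sigma> h s)"
    using inj_onD[OF inj, of "s h" "s (Suc h)"] \<open>s h < s (Suc h)\<close> \<open>s (Suc h) \<le> i\<close>
    by (intro less_extend_dp) (auto simp: seq_dp_def)
  also have "\<dots> = dp \<sigma> (Suc h) i" by (simp add: opt seq_dp_Suc)
  finally show ?thesis .
qed

lemma strict_mono_on_dp:
  assumes "inj_on \<sigma> {0..i}"
  shows "strict_mono_on {..<Suc i} (\<lambda>h. dp \<sigma> h i)"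
proof (rule strict_mono_onI)
  fix r s :: nat assume "r \<in> {..<Suc i}" "s \<in> {..<Suc i}" "r < s"
  then have "s \<le> i" by simp
  with \<open>r < s\<close> show "dp \<sigma> r i < dp \<sigma> s i"
    by (induction rule: less_Suc_induct) (use dp_less_dp_Suc[OF _ assms] in auto)
qed

lemma snd_dp_mem: "h \<le> i \<Longrightarrow> snd (dp \<sigma> h i) \<in> int ` \<sigma> ` {0..i}"
  using Min_in[OF finite_seq_dp_image, of \<sigma> h i]
  by (force simp: dp_eq_Min idx_seqs_eq_empty_iff seq_dp_def idx_seqs_def)

definition lower_closed :: "(nat \<Rightarrow> int \<times> int) \<Rightarrow> nat \<Rightarrow> bool" where
  "lower_closed a m \<longleftrightarrow>
     (\<forall>h<m. \<forall>e q. a h = (e + 1, q) \<longrightarrow> a 0 \<le> (e, q) \<longrightarrow> (\<exists>k<m. a k = (e, q)))"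

lemma lower_closed_cong:
  "lower_closed a m \<Longrightarrow> (\<And>h. h < m \<Longrightarrow> a h = b h) \<Longrightarrow> lower_closed b m"
  unfolding lower_closed_def by (metis gr_zeroI less_nat_zero_code)

lemma lower_closed_le_pred:
  assumes mono: "strict_mono_on {..<m} a" and closed: "lower_closed a m"
    and "g < m" "a g = (e + 1, p)" "Suc k < m" "(e, p) < a (Suc k)"
  shows "(e, p) \<le> a k"
proof (cases "a 0 \<le> (e, p)")
  case True
  with closed assms(3,4) obtain l where "l < m" "a l = (e, p)"
    unfolding lower_closed_def by blast
  with mono assms(5,6) have "l \<le> k"
    using strict_mono_on_less[of "{..<m}" a l "Suc k"] by auto
  with strict_mono_on_leD[OF mono, of l k] \<open>a l = (e, p)\<close> assms(5) show ?thesis by simp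
next
  case False
  with strict_mono_on_leD[OF mono, of 0 k] assms(5) show ?thesis by auto
qed

lemma next_row_keeps_lowered_entry:
  assumes mono: "strict_mono_on {..<m} a" and closed: "lower_closed a m"
    and avoid: "\<And>h. h < m \<Longrightarrow> snd (a h) \<noteq> v"
    and g: "Suc g < m" "a (Suc g) \<le> extend_dp v (a g)" "a (Suc g) = (e + 1, q)"
    and k: "Suc k < m" "a (Suc k) = (e, q)"
  shows "a (Suc k) \<le> extend_dp v (a k)"
proof (rule ccontr)
  assume contra: "\<not> a (Suc k) \<le> extend_dp v (a k)"
  obtain dc pc where c: "a g = (dc, pc)" by fastforce
  obtain dk pk where dk: "a k = (dk, pk)" by fastforce
  have "a (Suc k) < a (Suc g)" using g(3) k(2) by simp
  then have "k < g" using strict_mono_on_less[OF mono] g(1) k(1) by simp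
  then have "(e, q) \<le> (dc, pc)"
    using strict_mono_on_leD[OF mono, of "Suc k" g] g(1) k(2) c by simp
  moreover have "(dc, pc) < (e + 1, q)" using strict_mono_onD[OF mono, of g "Suc g"] g c by simp
  moreover have "(dk, pk) < (e, q)" using strict_mono_onD[OF mono, of k "Suc k"] k dk by simp
  moreover have "q \<noteq> v" using avoid[OF g(1)] g(3) by simp
  moreover have "(e, pc) \<le> (dk, pk)" if "dc = e + 1" "pc < q"
    using lower_closed_le_pred[OF mono closed, of g e pc k] that c dk g(1) k by simp
  moreover have "(e - 1, pc) \<le> (dk, pk)" if "dc = e"
    using lower_closed_le_pred[OF mono closed, of g "e - 1" pc k] that c dk g(1) k by simp
  \<comment> \<open>Whether \<open>a g\<close> lies on level \<open>e\<close> or \<open>e + 1\<close>, its lowered copy sits between \<open>a k\<close> and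
    \<open>a (Suc k)\<close>, which puts \<open>a k\<close> high enough that its extension by \<open>v\<close> is not below \<open>(e, q)\<close>.\<close>
  ultimately show False
    using contra g(2,3) k(2) c dk by (auto simp: extend_dp_def split: if_splits)
qed

lemma next_row_contains_lowered_extension:
  assumes mono: "strict_mono_on {..<m} a" and closed: "lower_closed a m"
    and avoid: "\<And>h. h < m \<Longrightarrow> snd (a h) \<noteq> v"
    and g: "g < m" "extend_dp v (a g) = (e + 1, v)" and ge: "a 0 \<le> (e, v)"
  shows "\<exists>r<m. next_row a m v r = (e, v)"
proof -
  obtain dc pc where c: "a g = (dc, pc)" by fastforce
  have "(e, v) < a g" using g(2) avoid[OF g(1)] c by (auto simp: extend_dp_def split: if_splits)
  moreover have "\<not> (e, v) < a 0" using ge by simp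
  ultimately obtain k where "k < g" and "\<not> (e, v) < a k" and above: "(e, v) < a (Suc k)"
    using ex_least_nat_less[of "\<lambda>i. (e, v) < a i" g] by auto
  moreover have "snd (a k) \<noteq> v" using avoid \<open>k < g\<close> g(1) by simp
  ultimately have prev: "a k < (e, v)" by (cases "a k") auto
  obtain dk pk where dk: "a k = (dk, pk)" by fastforce
  obtain dr pr where dr: "a (Suc k) = (dr, pr)" by fastforce
  have "a (Suc k) \<le> a g" using strict_mono_on_leD[OF mono, of "Suc k" g] \<open>k < g\<close> g(1) by simp
  moreover have "(e, pc) \<le> (dk, pk)" if "(e, pc) < a (Suc k)" "dc = e + 1"
    using lower_closed_le_pred[OF mono closed, of g e pc k] that c dk g(1) \<open>k < g\<close> by simp
  moreover have "(e - 1, pr) \<le> (dk, pk)" if "dr = e"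
    using lower_closed_le_pred[OF mono closed, of "Suc k" "e - 1" pr k] that dr dk g(1) \<open>k < g\<close>
    by simp
  ultimately have "extend_dp v (a k) = (e, v)"
    using prev above g(2) c dk dr by (auto simp: extend_dp_def split: if_splits)
  then have "next_row a m v (Suc k) = (e, v)"
    using above \<open>k < g\<close> g(1) by (simp add: next_row_def)
  then show ?thesis using \<open>k < g\<close> g(1) by (intro exI[of _ "Suc k"]) simp
qed

lemma lower_closed_next_row:
  assumes mono: "strict_mono_on {..<m} a" and closed: "lower_closed a m"
    and avoid: "\<And>h. h < m \<Longrightarrow> snd (a h) \<noteq> v"
  shows "lower_closed (next_row a m v) (Suc m)"
  unfolding lower_closed_def
proof (intro allI impI)
  fix h e q
  assume h: "h < Suc m" and hq: "next_row a m v h = (e + 1, q)" and "next_row a m v 0 \<le> (e, q)"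
  then have ge: "a 0 \<le> (e, q)" by (simp add: next_row_def)
  obtain g where g: "h = Suc g"
    using hq ge by (cases h) (auto simp: next_row_def)
  show "\<exists>k<Suc m. next_row a m v k = (e, q)"
  proof (cases "Suc g < m \<and> a (Suc g) \<le> extend_dp v (a g)")
    case True
    then have "a (Suc g) = (e + 1, q)" using hq g by (simp add: next_row_def)
    with closed True ge obtain k where k: "k < m" "a k = (e, q)"
      unfolding lower_closed_def by blast
    show ?thesis
    proof (cases k)
      case 0
      with k show ?thesis by (auto simp: next_row_def)
    next
      case (Suc k')
      with next_row_keeps_lowered_entry[OF mono closed avoid, of g e q k'] True k
        \<open>a (Suc g) = (e + 1, q)\<close>
      have "next_row a m v k = (e, q)" by (simp add: next_row_def min_def)
      with k show ?thesis using less_SucI by blast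
    qed
  next
    case False
    then have "extend_dp v (a g) = (e + 1, q)"
      using hq g by (auto simp: next_row_def min_def split: if_splits)
    moreover from this have "q = v" by (simp add: extend_dp_def)
    ultimately obtain r where "r < m" "next_row a m v r = (e, q)"
      using next_row_contains_lowered_extension[OF mono closed avoid, of g e] h g ge by auto
    then show ?thesis using less_SucI by blast
  qed
qed

lemma lower_closed_dp: "inj_on \<sigma> {0..j} \<Longrightarrow> lower_closed (\<lambda>h. dp \<sigma> h j) (Suc j)"
proof (induction j)
  case 0
  show ?case by (simp add: lower_closed_def dp_0)
next
  case (Suc j)
  let ?a = "\<lambda>h. dp \<sigma> h j" and ?v = "int (\<sigma> (Suc j))"
  have inj: "inj_on \<sigma> {0..j}" using Suc.prems by (rule inj_on_subset) auto
  have "snd (?a h) \<noteq> ?v" if "h < Suc j" for h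
    using snd_dp_mem[of h j \<sigma>] that inj_onD[OF Suc.prems, of _ "Suc j"] by force
  with Suc.IH[OF inj] strict_mono_on_dp[OF inj]
  have "lower_closed (next_row ?a (Suc j) ?v) (Suc (Suc j))"
    by (intro lower_closed_next_row) auto
  then show ?case by (rule lower_closed_cong) (simp_all add: dp_next_row)
qed

theorem lemma10:
  fixes n i :: nat and x :: "nat \<Rightarrow> real" and \<sigma> :: "nat \<Rightarrow> nat" and d p :: int
  assumes sorted: "\<And>a b. a \<le> b \<Longrightarrow> b \<le> n + 1 \<Longrightarrow> x a \<le> x b"
    and perm: "bij_betw \<sigma> {0..n+1} {0..n+1}"
    and pi_def: "\<And>a b. a < b \<Longrightarrow> b \<le> n + 1 \<Longrightarrow>
        (\<sigma> a > \<sigma> b \<longleftrightarrow> (frac (x a), - x a, a) < (frac (x b), - x b, b))"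
    and i_le: "i \<le> n"
    and mem: "(d + 1, p) \<in> DP \<sigma> i"
    and ge: "(d, p) \<ge> (0, int (\<sigma> 0))"
  shows "(d, p) \<in> DP \<sigma> i"
proof -
  \<comment> \<open>Only injectivity of \<open>\<sigma>\<close> on \<open>{0..i}\<close> is used.\<close>
  have "inj_on \<sigma> {0..i}"
    using bij_betw_imp_inj_on[OF perm] by (rule inj_on_subset) (use i_le in auto)
  then have closed: "lower_closed (\<lambda>h. dp \<sigma> h i) (Suc i)" by (rule lower_closed_dp)
  from mem obtain h where h: "h \<le> i" "dp \<sigma> h i = (d + 1, p)"
    by (auto simp: DP_def)
  have "\<exists>k<Suc i. dp \<sigma> k i = (d, p)"
    by (rule closed[unfolded lower_closed_def, rule_format]) (use h ge in \<open>auto simp: dp_0\<close>)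
  then obtain k where "k \<le> i" "dp \<sigma> k i = (d, p)" by (auto simp: less_Suc_eq_le)
  then show ?thesis by (auto simp: DP_def intro!: exI[of _ k])
qed

end
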